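(* Let $d\ge 3$, $m=d$, $\lambda>0$, $w_\star,v\in\mathbb{S}^{d-1}$ with $v^\top w_\star=0$, $Q=I_d+\lambda vv^\top$, $P_\perp=I_d-w_\star w_\star^\top-vv^\top$. Let $\mathcal L(W)=\mathbb{E}\big(y-\sum_{j=1}^m(w_j^\top x)^2\big)^2$ with $x\sim\mathcal N(0,Q)$, $y=(x^\top w_\star)^2+\nu$, $\nu\sim\mathcal N(0,\sigma^2)$ independent of $x$. Consider the spectral gradient flow $\dot W(t)=-\mathrm{polar}(\nabla_W\mathcal L(W(t)))$ and suppose $M(t):=W(t)W(t)^\top=a(t)\,w_\star w_\star^\top+b(t)\,vv^\top+c(t)\,P_\perp$ with $a,b,c\ge 0$. Let $r:=a+(1+\lambda)b+(d-2)c$ and \[ g_{w_\star}=8(a-1)+4(r-1),\quad g_v=8(1+\lambda)^2 b+4(1+\lambda)(r-1),\quad g_\perp=8c+4(r-1). \] Then \[ \dot a=-2\,\mathrm{sgn}(g_{w_\star})\sqrt a,\qquad \dot b=-2\,\mathrm{sgn}(g_v)\sqrt b,\qquad \dot c=-2\,\mathrm{sgn}(g_\perp)\sqrt c, \] with the convention $\mathrm{sgn}(0)=0$. Equivalently, with $\alpha=\sqrt a$, $\beta=\sqrt b$, $\gamma=\sqrt c$: $\dot\alpha=-\mathrm{sgn}(g_{w_\star})$, $\dot\beta=-\mathrm{sgn}(g_v)$, $\dot\gamma=-\mathrm{sgn}(g_\perp)$.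
   Context: For a matrix $A$, $\mathrm{polar}(A):=A(A^\top A)^{-1/2}$ with $(\cdot)^{-1/2}$ in the Moore–Penrose sense. *)

theory Defs
  imports "HOL-Analysis.Analysis" "HOL-Probability.Probability"
begin

definition outer :: "real^'n \<Rightarrow> real^'n \<Rightarrow> real^'n^'n" where
  "outer u v = (\<chi> i j. u $ i * v $ j)"

definition psd :: "real^'n^'n \<Rightarrow> bool" where
  "psd S \<longleftrightarrow> transpose S = S \<and> (\<forall>x. 0 \<le> x \<bullet> (S *v x))"

definition psd_sqrt :: "real^'n^'n \<Rightarrow> real^'n^'n" where
  "psd_sqrt S = (THE R. psd R \<and> R ** R = S)"

definition pinv :: "real^'n^'n \<Rightarrow> real^'n^'n" where
  "pinv A = (THE X. A ** X ** A = A \<and> X ** A ** X = X \<and>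
                    transpose (A ** X) = A ** X \<and> transpose (X ** A) = X ** A)"

definition polar :: "real^'m^'n \<Rightarrow> real^'m^'n" where
  "polar A = A ** pinv (psd_sqrt (transpose A ** A))"

definition grad :: "('a::real_inner \<Rightarrow> real) \<Rightarrow> 'a \<Rightarrow> 'a" where
  "grad f x = (THE G. (f has_derivative (\<lambda>h. G \<bullet> h)) (at x))"

text \<open>Population loss: x = Q^{1/2} z with z standard Gaussian on R^d (so x ~ N(0,Q)),
  noise nu = sigma * s with s standard Gaussian independent of z (so nu ~ N(0,sigma^2)),
  y = (x^T w_star)^2 + nu, prediction sum_j (w_j^T x)^2 over the columns w_j of W.\<close>
definition pop_loss :: "real \<Rightarrow> real^'n^'n \<Rightarrow> real^'n \<Rightarrow> real^'m^'n \<Rightarrow> real" where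
  "pop_loss \<sigma> Q wstar W =
     (\<integral>z. (\<Prod>i\<in>UNIV. std_normal_density (z $ i)) *
        (\<integral>s. std_normal_density s *
            (((psd_sqrt Q *v z) \<bullet> wstar)\<^sup>2 + \<sigma> * s
              - (\<Sum>j\<in>UNIV. (column j W \<bullet> (psd_sqrt Q *v z))\<^sup>2))\<^sup>2 \<partial>lborel) \<partial>lborel)"

end

(*
  With S = Q^(1/2) and K = S w* w*^T S - S W W^T S, Isserlis' formula for Gaussian fourth
  moments gives the closed form L(W) = (tr K)^2 + 2 |K|_F^2 + sigma^2, hence
  grad L(W) = -4 (tr K) S^2 W - 8 S K S W.  When W W^T and Q are both diagonal in the
  orthogonal frame w*, v, {w*, v}^perp, so is K, and the gradient is D W with
  D = diag(g_w, g_v, g_perp) in that frame.  If mu and g are the eigenvalues of W W^T and D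
  on a frame direction, then W^T diag(|g| / sqrt mu) W is the PSD square root of
  (D W)^T (D W) and W^T diag(1 / (|g| mu sqrt mu)) W its pseudo-inverse, so
  polar(D W) = diag(sgn g / sqrt mu) W.  For a unit vector e of the frame this gives
  d/dt e^T W W^T e = -2 (sgn g / sqrt mu) mu = -2 sgn g sqrt mu.
*)
theory Submission
  imports Defs
begin

lemma matrix_add_rdistrib: "(B + C) ** A = B ** A + C ** A"
  by (vector matrix_matrix_mult_def sum.distrib[symmetric] field_simps)

lemma matrix_diff_ldistrib: "A ** (B - C) = A ** B - A ** (C :: 'a::ring_1^_^_)"
  by (vector matrix_matrix_mult_def sum_subtractf[symmetric] field_simps)

lemma matrix_diff_rdistrib: "(B - C) ** A = B ** A - C ** (A :: 'a::ring_1^_^_)"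
  by (vector matrix_matrix_mult_def sum_subtractf[symmetric] field_simps)

lemma transpose_diff: "transpose (X - Y) = transpose X - transpose (Y :: real^'m^'n)"
  by (simp add: transpose_def vec_eq_iff)

lemma transpose_uminus: "transpose (- X) = - transpose (X :: real^'m^'n)"
  by (simp add: transpose_def vec_eq_iff)

lemma trace_uminus: "trace (- (A :: real^'n^'n)) = - trace A"
  by (simp add: trace_def sum_negf)

lemma trace_scaleR: "trace (k *\<^sub>R (A :: real^'n^'n)) = k * trace A"
  by (simp add: trace_def sum_distrib_left)

lemma trace_outer_self: "trace (outer u u) = u \<bullet> u"
  by (simp add: trace_def outer_def inner_vec_def)

lemma outer_mult_vector: "outer u u' *v x = (u' \<bullet> x) *\<^sub>R u"
  by (simp add: vec_eq_iff outer_def matrix_vector_mult_def inner_vec_def sum_distrib_left mult_ac)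

lemma transpose_outer: "transpose (outer u u') = outer u' u"
  by (simp add: vec_eq_iff outer_def transpose_def mult.commute)

lemma inner_matrix_vector_transpose:
  fixes A :: "real^'m^'n" shows "x \<bullet> (A *v y) = (transpose A *v x) \<bullet> y"
  by (simp add: dot_lmul_matrix)

lemma inner_matrix_vector_sym:
  fixes R :: "real^'n^'n" assumes "transpose R = R" shows "x \<bullet> (R *v y) = (R *v x) \<bullet> y"
  using inner_matrix_vector_transpose[of x R y] assms by simp

lemma matrix_axis_component: "(A *v axis i 1) $ j = (A $ j $ i :: real)"
  by (simp add: matrix_vector_mult_def axis_def if_distrib if_distribR cong: if_cong)

lemma matrix_eq_0_if_axis:
  fixes A :: "real^'n^'m" assumes "\<And>i. A *v axis i 1 = 0" shows "A = 0"
proof -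
  have "A $ j $ i = 0" for i j
    by (metis assms matrix_axis_component zero_index)
  then show ?thesis by (simp add: vec_eq_iff)
qed

lemma matrix_mult_transpose_self_eq_0:
  fixes X :: "real^'m^'n" assumes "X ** transpose X = 0" shows "X = 0"
proof -
  have "(\<Sum>k\<in>UNIV. (X$i$k)\<^sup>2) = 0" for i
  proof -
    have "(X ** transpose X) $ i $ i = (\<Sum>k\<in>UNIV. (X$i$k)\<^sup>2)"
      by (simp add: matrix_matrix_mult_def transpose_def power2_eq_square)
    then show ?thesis using assms by simp
  qed
  then show ?thesis by (simp add: sum_nonneg_eq_0_iff vec_eq_iff)
qed

lemma transpose_sandwich:
  fixes W :: "real^'m^'n" assumes "transpose D = D"
  shows "transpose (transpose W ** D ** W) = transpose W ** D ** W"
  using assms by (simp add: matrix_transpose_mul matrix_mul_assoc)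

lemma sandwich_eq_0_imp_mult_eq_0:
  fixes E :: "real^'n^'n" and W :: "real^'m^'n"
  assumes "transpose E = E" "E ** (W ** transpose W) ** E = 0" shows "E ** W = 0"
proof -
  have "(E ** W) ** transpose (E ** W) = E ** (W ** transpose W) ** E"
    using assms(1) by (simp add: matrix_transpose_mul matrix_mul_assoc)
  then show ?thesis using assms(2) matrix_mult_transpose_self_eq_0 by metis
qed

lemma trace_sandwich_sym:
  fixes D R :: "real^'n^'n" assumes "transpose D = D"
  shows "trace (D ** R ** D) = (\<Sum>i\<in>UNIV. (D *v axis i 1) \<bullet> (R *v (D *v axis i 1)))"
proof -
  have "(D ** R ** D) $ i $ i = (D *v axis i 1) \<bullet> (R *v (D *v axis i 1))" for i
  proof -
    have "(D ** R ** D) $ i $ i = axis i 1 \<bullet> (D *v (R *v (D *v axis i 1)))"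
      by (simp add: inner_axis' matrix_axis_component matrix_vector_mul_assoc matrix_mul_assoc)
    then show ?thesis using inner_matrix_vector_sym[OF assms] by simp
  qed
  then show ?thesis by (simp add: trace_def)
qed

lemma inner_matrix_mult_right:
  fixes X :: "real^'k^'n" and Y :: "real^'m^'n" and Z :: "real^'k^'m"
  shows "X \<bullet> (Y ** Z) = (transpose Y ** X) \<bullet> Z"
proof -
  have "X \<bullet> (Y ** Z) = (\<Sum>i\<in>UNIV. \<Sum>l\<in>UNIV. \<Sum>j\<in>UNIV. X$i$l * Y$i$j * Z$j$l)"
    by (simp add: inner_vec_def matrix_matrix_mult_def sum_distrib_left mult_ac)
  also have "\<dots> = (\<Sum>i\<in>UNIV. \<Sum>j\<in>UNIV. \<Sum>l\<in>UNIV. X$i$l * Y$i$j * Z$j$l)"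
    by (rule sum.cong[OF refl], rule sum.swap)
  also have "\<dots> = (\<Sum>j\<in>UNIV. \<Sum>i\<in>UNIV. \<Sum>l\<in>UNIV. X$i$l * Y$i$j * Z$j$l)"
    by (rule sum.swap)
  also have "\<dots> = (\<Sum>j\<in>UNIV. \<Sum>l\<in>UNIV. \<Sum>i\<in>UNIV. X$i$l * Y$i$j * Z$j$l)"
    by (rule sum.cong[OF refl], rule sum.swap)
  also have "\<dots> = (transpose Y ** X) \<bullet> Z"
    by (simp add: inner_vec_def matrix_matrix_mult_def transpose_def sum_distrib_right sum_distrib_left mult_ac)
  finally show ?thesis .
qed

lemma inner_transpose_transpose:
  fixes X Y :: "real^'m^'n" shows "transpose X \<bullet> transpose Y = X \<bullet> Y"
  by (simp add: inner_vec_def transpose_def) (rule sum.swap)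

lemma inner_matrix_mult_left:
  fixes X :: "real^'k^'n" and Y :: "real^'m^'n" and Z :: "real^'k^'m"
  shows "X \<bullet> (Y ** Z) = (X ** transpose Z) \<bullet> Y"
proof -
  have "X \<bullet> (Y ** Z) = transpose X \<bullet> (transpose Z ** transpose Y)"
    by (simp add: inner_transpose_transpose flip: matrix_transpose_mul)
  also have "\<dots> = (Z ** transpose X) \<bullet> transpose Y"
    by (simp add: inner_matrix_mult_right)
  also have "\<dots> = (X ** transpose Z) \<bullet> Y"
    by (metis inner_transpose_transpose matrix_transpose_mul transpose_transpose)
  finally show ?thesis .
qed

lemma trace_eq_inner_mat_1: "trace (X :: real^'n^'n) = mat 1 \<bullet> X"
  by (simp add: trace_def inner_vec_def mat_def if_distrib if_distribR cong: if_cong)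

section \<open>Uniqueness of the PSD square root and of the pseudo-inverse\<close>

lemma psd_quadratic_form_eq_0:
  fixes R :: "real^'n^'n"
  assumes "psd R" "y \<bullet> (R *v y) = 0" shows "R *v y = 0"
proof -
  have sym: "transpose R = R" and pos: "\<And>x. 0 \<le> x \<bullet> (R *v x)" using assms(1) psd_def by auto
  define z where "z = R *v y"
  define q where "q = z \<bullet> z"
  define c where "c = z \<bullet> (R *v z)"
  have "c \<ge> 0" using pos by (simp add: c_def)
  have "y \<bullet> (R *v z) = q" using inner_matrix_vector_sym[OF sym, of y z] by (simp add: q_def z_def)
  then have "(y + t *\<^sub>R z) \<bullet> (R *v (y + t *\<^sub>R z)) = 2 * t * q + t * t * c" for t
    using assms(2) by (simp add: matrix_vector_right_distrib matrix_vector_mult_scaleR inner_add_left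
        inner_add_right c_def q_def z_def algebra_simps)
  then have "0 \<le> 2 * t * q + t * t * c" for t using pos by metis
  \<comment> \<open>at \<open>t = - q / (c + 1)\<close> this reads \<open>0 \<le> - q\<^sup>2 (c + 2) / (c + 1)\<^sup>2\<close>\<close>
  define t where "t = - q / (c + 1)"
  have "(c + 1) * (c + 1) * (2 * t * q + t * t * c) = - (q * q * (c + 2))"
  proof -
    have tc: "t * (c + 1) = - q" using \<open>c \<ge> 0\<close> by (simp add: t_def)
    have "(c + 1) * (c + 1) * (2 * t * q + t * t * c)
        = 2 * q * (c + 1) * (t * (c + 1)) + c * (t * (c + 1)) * (t * (c + 1))"
      by (simp add: algebra_simps)
    then show ?thesis unfolding tc by (simp add: algebra_simps)
  qed
  moreover have "0 \<le> (c + 1) * (c + 1) * (2 * t * q + t * t * c)"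
    using \<open>0 \<le> 2 * t * q + t * t * c\<close> by simp
  ultimately have "q * q \<le> 0" using \<open>c \<ge> 0\<close> by (simp add: mult_le_0_iff)
  then have "q = 0" by (auto simp: mult_le_0_iff)
  then show ?thesis unfolding q_def z_def by simp
qed

lemma psd_sqrt_unique:
  fixes R R' :: "real^'n^'n"
  assumes p: "psd R" and p': "psd R'" and eq: "R ** R = R' ** R'"
  shows "R = R'"
proof -
  have pos: "\<And>x. 0 \<le> x \<bullet> (R *v x)" "\<And>x. 0 \<le> x \<bullet> (R' *v x)" using p p' psd_def by auto
  define D where "D = R - R'"
  have sD: "transpose D = D" unfolding D_def using p p' by (simp add: psd_def transpose_diff)
  have "R ** D + D ** R' = 0" unfolding D_def using eq
    by (simp add: matrix_diff_ldistrib matrix_diff_rdistrib)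
  then have "D ** (R ** D + D ** R') = 0" by simp
  then have "D ** R ** D + D ** D ** R' = 0" by (simp add: matrix_add_ldistrib matrix_mul_assoc)
  then have "trace (D ** R ** D + D ** D ** R') = 0" by (simp add: trace_0[unfolded mat_0])
  then have "trace (D ** R ** D) + trace (D ** D ** R') = 0" by (simp add: trace_add)
  moreover have "trace (D ** D ** R') = trace (D ** R' ** D)"
    by (metis matrix_mul_assoc trace_mul_sym)
  ultimately have "trace (D ** R ** D) + trace (D ** R' ** D) = 0" by simp
  then have "(\<Sum>i\<in>UNIV. (D *v axis i 1) \<bullet> (R *v (D *v axis i 1)))
      + (\<Sum>i\<in>UNIV. (D *v axis i 1) \<bullet> (R' *v (D *v axis i 1))) = 0"
    by (simp add: trace_sandwich_sym[OF sD])
  then have "(D *v axis i 1) \<bullet> (R *v (D *v axis i 1)) = 0"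
    and "(D *v axis i 1) \<bullet> (R' *v (D *v axis i 1)) = 0" for i
    using pos by (simp_all add: add_nonneg_eq_0_iff sum_nonneg sum_nonneg_eq_0_iff)
  then have "R *v (D *v axis i 1) = 0" "R' *v (D *v axis i 1) = 0" for i
    using psd_quadratic_form_eq_0[OF p] psd_quadratic_form_eq_0[OF p'] by blast+
  then have "R ** D = 0" "R' ** D = 0"
    by (auto intro!: matrix_eq_0_if_axis simp flip: matrix_vector_mul_assoc)
  then have "D ** transpose D = 0" unfolding sD unfolding D_def by (simp add: matrix_diff_rdistrib)
  then have "D = 0" by (rule matrix_mult_transpose_self_eq_0)
  then show ?thesis unfolding D_def by simp
qed

lemma psd_sqrt_eqI: "psd R \<Longrightarrow> R ** R = S \<Longrightarrow> psd_sqrt S = R"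
  unfolding psd_sqrt_def by (rule the_equality) (auto intro: psd_sqrt_unique)

lemma pinv_unique:
  fixes A X Y :: "real^'n^'n"
  assumes X1: "A ** X ** A = A" and X2: "X ** A ** X = X"
    and X3: "transpose (A ** X) = A ** X" and X4: "transpose (X ** A) = X ** A"
    and Y1: "A ** Y ** A = A" and Y2: "Y ** A ** Y = Y"
    and Y3: "transpose (A ** Y) = A ** Y" and Y4: "transpose (Y ** A) = Y ** A"
  shows "X = Y"
proof -
  have "A ** X = transpose X ** transpose (A ** Y ** A)"
    using X3 Y1 by (simp add: matrix_transpose_mul)
  also have "\<dots> = (A ** X ** A) ** Y"
    using X3 Y3 by (simp add: matrix_transpose_mul matrix_mul_assoc)
  finally have AX: "A ** X = A ** Y" using X1 by simp
  have "X ** A = transpose (A ** Y ** A) ** transpose X"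
    using X4 Y1 by (simp add: matrix_transpose_mul)
  also have "\<dots> = transpose (Y ** A) ** transpose (X ** A)"
    by (simp add: matrix_transpose_mul matrix_mul_assoc)
  also have "\<dots> = Y ** (A ** X ** A)"
    using X4 Y4 by (simp add: matrix_mul_assoc)
  finally have XA: "X ** A = Y ** A" using X1 by simp
  have "X = X ** (A ** X)" using X2 by (simp add: matrix_mul_assoc)
  also have "\<dots> = Y ** A ** Y" using AX XA by (simp add: matrix_mul_assoc)
  finally show ?thesis using Y2 by simp
qed

lemma pinv_eqI:
  fixes A X :: "real^'n^'n"
  assumes "A ** X ** A = A" "X ** A ** X = X"
    "transpose (A ** X) = A ** X" "transpose (X ** A) = X ** A"
  shows "pinv A = X"
  unfolding pinv_def by (rule the_equality) (use assms pinv_unique[of A _ X] in blast)+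

section \<open>Matrices diagonal in the frame \<open>w, v, {w, v}\<^sup>\<bottom>\<close>\<close>

definition diag3 :: "real^'n \<Rightarrow> real^'n \<Rightarrow> real \<Rightarrow> real \<Rightarrow> real \<Rightarrow> real^'n^'n" where
  "diag3 w v x y z = x *\<^sub>R outer w w + y *\<^sub>R outer v v + z *\<^sub>R (mat 1 - outer w w - outer v v)"

lemma diag3_mult_vector:
  "diag3 w v x y z *v u = (x * (w \<bullet> u)) *\<^sub>R w + (y * (v \<bullet> u)) *\<^sub>R v
     + z *\<^sub>R (u - (w \<bullet> u) *\<^sub>R w - (v \<bullet> u) *\<^sub>R v)"
  by (simp add: diag3_def matrix_vector_mult_add_rdistrib matrix_vector_mult_diff_rdistrib
      outer_mult_vector flip: scaleR_matrix_vector_assoc)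

lemma transpose_diag3: "transpose (diag3 w v x y z) = diag3 w v x y z"
  by (simp add: diag3_def transpose_def outer_def vec_eq_iff mat_def mult.commute)

lemma diag3_diff: "diag3 w v x y z - diag3 w v x' y' z' = diag3 w v (x - x') (y - y') (z - z')"
  by (simp add: diag3_def algebra_simps)

lemma scaleR_diag3: "k *\<^sub>R diag3 w v x y z = diag3 w v (k * x) (k * y) (k * z)"
  by (simp add: diag3_def algebra_simps)

lemma diag3_0: "diag3 w v 0 0 0 = 0"
  by (simp add: diag3_def)

locale orthonormal_pair =
  fixes w v :: "real^'n"
  assumes ww: "w \<bullet> w = 1" and vv: "v \<bullet> v = 1" and wv: "w \<bullet> v = 0"
begin

lemma vw: "v \<bullet> w = 0"
  using wv by (simp add: inner_commute)

lemma inner_diag3_w: "w \<bullet> (diag3 w v x y z *v u) = x * (w \<bullet> u)"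
  by (simp add: diag3_mult_vector inner_add_right inner_diff_right ww wv vw algebra_simps)

lemma inner_diag3_v: "v \<bullet> (diag3 w v x y z *v u) = y * (v \<bullet> u)"
  by (simp add: diag3_mult_vector inner_add_right inner_diff_right vv wv vw algebra_simps)

lemma diag3_mult: "diag3 w v x y z ** diag3 w v x' y' z' = diag3 w v (x * x') (y * y') (z * z')"
proof -
  have "diag3 w v x y z *v (diag3 w v x' y' z' *v u) = diag3 w v (x * x') (y * y') (z * z') *v u" for u
    by (simp add: diag3_mult_vector[of _ _ x y z] inner_diag3_w inner_diag3_v)
       (simp add: diag3_mult_vector algebra_simps)
  then show ?thesis by (simp add: matrix_eq matrix_vector_mul_assoc)
qed

lemma diag3_w: "diag3 w v x y z *v w = x *\<^sub>R w"
  by (simp add: diag3_mult_vector ww vw)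

lemma diag3_v: "diag3 w v x y z *v v = y *\<^sub>R v"
  by (simp add: diag3_mult_vector vv wv)

lemma diag3_orth: "u \<bullet> w = 0 \<Longrightarrow> u \<bullet> v = 0 \<Longrightarrow> diag3 w v x y z *v u = z *\<^sub>R u"
  by (simp add: diag3_mult_vector inner_commute)

lemma trace_diag3: "trace (diag3 w v x y z) = x + y + (real CARD('n) - 2) * z"
  by (simp add: diag3_def trace_add trace_sub trace_scaleR trace_outer_self trace_I ww vv algebra_simps)

lemma psd_diag3:
  assumes "x \<ge> 0" "y \<ge> 0" "z \<ge> 0" shows "psd (diag3 w v x y z)"
  unfolding psd_def
proof (intro conjI allI)
  show "transpose (diag3 w v x y z) = diag3 w v x y z" by (rule transpose_diag3)
  fix u
  let ?p = "u - (w \<bullet> u) *\<^sub>R w - (v \<bullet> u) *\<^sub>R v"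
  have "u \<bullet> (diag3 w v x y z *v u)
      = x * (w \<bullet> u)\<^sup>2 + y * (v \<bullet> u)\<^sup>2 + z * (u \<bullet> u - (w \<bullet> u)\<^sup>2 - (v \<bullet> u)\<^sup>2)"
    by (simp add: diag3_mult_vector inner_add_right inner_diff_right inner_commute power2_eq_square algebra_simps)
  also have "u \<bullet> u - (w \<bullet> u)\<^sup>2 - (v \<bullet> u)\<^sup>2 = ?p \<bullet> ?p"
    by (simp add: inner_diff_left inner_diff_right ww vv wv vw inner_commute power2_eq_square algebra_simps)
  finally show "0 \<le> u \<bullet> (diag3 w v x y z *v u)" using assms by simp
qed

lemma psd_sqrt_diag3:
  assumes "x \<ge> 0" "y \<ge> 0" "z \<ge> 0"
  shows "psd_sqrt (diag3 w v x y z) = diag3 w v (sqrt x) (sqrt y) (sqrt z)"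
  using assms by (intro psd_sqrt_eqI psd_diag3) (simp_all add: diag3_mult)

end

section \<open>The polar factor of \<open>D W\<close>\<close>

text \<open>\<open>r\<close> and \<open>h\<close> are the coefficients, on an eigenvector of \<open>W W\<^sup>T\<close> with eigenvalue \<open>m\<close>,
  of the square root and of the pseudo-inverse constructed in \<open>polar_diag3_mult\<close>. For \<open>m = 0\<close>
  or \<open>g = 0\<close> the identities hold only because division by zero yields zero.\<close>

lemma polar_coeff_identities:
  fixes g m :: real
  assumes "m \<ge> 0"
  defines "r \<equiv> \<bar>g\<bar> / sqrt m" and "h \<equiv> 1 / (\<bar>g\<bar> * m * sqrt m)"
  shows "(r * m * r - g * g) * m * (r * m * r - g * g) = 0"
    and "r * m * h * m * r = r" and "h * m * r * m * h = h"
    and "g * m * h = sgn g / sqrt m"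
proof -
  consider "g = 0 \<or> m = 0" | "g \<noteq> 0" "sqrt m > 0" "m > 0"
    using assms by fastforce
  then show "(r * m * r - g * g) * m * (r * m * r - g * g) = 0"
    and "r * m * h * m * r = r" and "h * m * r * m * h = h"
    and "g * m * h = sgn g / sqrt m"
    by cases (use assms in \<open>auto simp: r_def h_def field_simps sgn_if\<close>)
qed

lemma sandwich_mult_sandwich:
  fixes W :: "real^'m^'n"
  shows "(transpose W ** D1 ** W) ** (transpose W ** D2 ** W) = transpose W ** (D1 ** (W ** transpose W) ** D2) ** W"
  by (simp add: matrix_mul_assoc)

context orthonormal_pair
begin

lemma psd_diag3_sandwich:
  fixes W :: "real^'m^'n"
  assumes "x \<ge> 0" "y \<ge> 0" "z \<ge> 0"
  shows "psd (transpose W ** diag3 w v x y z ** W)"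
  unfolding psd_def
proof (intro conjI allI)
  show "transpose (transpose W ** diag3 w v x y z ** W) = transpose W ** diag3 w v x y z ** W"
    by (rule transpose_sandwich) (rule transpose_diag3)
  fix u
  have "u \<bullet> ((transpose W ** diag3 w v x y z ** W) *v u) = (W *v u) \<bullet> (diag3 w v x y z *v (W *v u))"
  proof -
    have "(transpose W ** diag3 w v x y z ** W) *v u = transpose W *v (diag3 w v x y z *v (W *v u))"
      by (simp only: matrix_vector_mul_assoc matrix_mul_assoc)
    then show ?thesis by (simp only: inner_matrix_vector_transpose[of u "transpose W"] transpose_transpose)
  qed
  also have "\<dots> \<ge> 0" using psd_diag3[OF assms] psd_def by blast
  finally show "0 \<le> u \<bullet> ((transpose W ** diag3 w v x y z ** W) *v u)" .
qed

lemma psd_sqrt_gram_diag3_mult: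
  fixes W :: "real^'m^'n" and g1 g2 g3 :: real
  assumes M: "W ** transpose W = diag3 w v a b c" and nn: "a \<ge> 0" "b \<ge> 0" "c \<ge> 0"
  defines "A \<equiv> diag3 w v g1 g2 g3 ** W"
  shows "psd_sqrt (transpose A ** A)
    = transpose W ** diag3 w v (\<bar>g1\<bar> / sqrt a) (\<bar>g2\<bar> / sqrt b) (\<bar>g3\<bar> / sqrt c) ** W"
proof -
  define r1 r2 r3 where "r1 = \<bar>g1\<bar> / sqrt a" "r2 = \<bar>g2\<bar> / sqrt b" "r3 = \<bar>g3\<bar> / sqrt c"
  define R where "R = transpose W ** diag3 w v r1 r2 r3 ** W"
  have AA: "transpose A ** A = transpose W ** diag3 w v (g1 * g1) (g2 * g2) (g3 * g3) ** W"
    unfolding A_def by (simp add: matrix_transpose_mul transpose_diag3 matrix_mul_assoc flip: diag3_mult)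
  have RR: "R ** R = transpose W ** diag3 w v (r1 * a * r1) (r2 * b * r2) (r3 * c * r3) ** W"
    unfolding R_def sandwich_mult_sandwich M diag3_mult ..
  \<comment> \<open>the two coefficient triples differ only where \<open>W W\<^sup>T\<close> vanishes\<close>
  have "diag3 w v (r1 * a * r1 - g1 * g1) (r2 * b * r2 - g2 * g2) (r3 * c * r3 - g3 * g3) ** W = 0"
    by (rule sandwich_eq_0_imp_mult_eq_0[OF transpose_diag3])
      (simp add: M diag3_mult diag3_0 polar_coeff_identities(1) nn r1_r2_r3_def)
  moreover have "R ** R - transpose A ** A
      = transpose W ** (diag3 w v (r1 * a * r1 - g1 * g1) (r2 * b * r2 - g2 * g2) (r3 * c * r3 - g3 * g3) ** W)"
    unfolding RR AA by (simp add: matrix_diff_ldistrib matrix_diff_rdistrib matrix_mul_assoc flip: diag3_diff)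
  ultimately have "R ** R = transpose A ** A" by simp
  then show ?thesis
    unfolding R_def r1_r2_r3_def
    by (intro psd_sqrt_eqI) (use nn in \<open>auto intro!: psd_diag3_sandwich\<close>)
qed

lemma pinv_diag3_sandwich:
  fixes W :: "real^'m^'n"
  assumes M: "W ** transpose W = diag3 w v a b c" and nn: "a \<ge> 0" "b \<ge> 0" "c \<ge> 0"
  shows "pinv (transpose W ** diag3 w v (\<bar>g1\<bar> / sqrt a) (\<bar>g2\<bar> / sqrt b) (\<bar>g3\<bar> / sqrt c) ** W)
    = transpose W ** diag3 w v (1 / (\<bar>g1\<bar> * a * sqrt a)) (1 / (\<bar>g2\<bar> * b * sqrt b))
        (1 / (\<bar>g3\<bar> * c * sqrt c)) ** W"
    (is "pinv ?R = ?X")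
proof (rule pinv_eqI)
  have RX: "?R ** ?X = transpose W ** diag3 w v
      (\<bar>g1\<bar> / sqrt a * a * (1 / (\<bar>g1\<bar> * a * sqrt a))) (\<bar>g2\<bar> / sqrt b * b * (1 / (\<bar>g2\<bar> * b * sqrt b)))
      (\<bar>g3\<bar> / sqrt c * c * (1 / (\<bar>g3\<bar> * c * sqrt c))) ** W"
    and XR: "?X ** ?R = transpose W ** diag3 w v
      (\<bar>g1\<bar> / sqrt a * a * (1 / (\<bar>g1\<bar> * a * sqrt a))) (\<bar>g2\<bar> / sqrt b * b * (1 / (\<bar>g2\<bar> * b * sqrt b)))
      (\<bar>g3\<bar> / sqrt c * c * (1 / (\<bar>g3\<bar> * c * sqrt c))) ** W"
    unfolding sandwich_mult_sandwich M diag3_mult by (simp_all add: mult_ac)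
  show "?R ** ?X ** ?R = ?R" "?X ** ?R ** ?X = ?X"
    unfolding RX XR sandwich_mult_sandwich M diag3_mult
    using polar_coeff_identities nn by (simp_all add: mult_ac)
  show "transpose (?R ** ?X) = ?R ** ?X" "transpose (?X ** ?R) = ?X ** ?R"
    unfolding RX XR by (simp_all add: transpose_sandwich transpose_diag3)
qed

lemma polar_diag3_mult:
  fixes W :: "real^'m^'n"
  assumes M: "W ** transpose W = diag3 w v a b c" and nn: "a \<ge> 0" "b \<ge> 0" "c \<ge> 0"
  shows "polar (diag3 w v g1 g2 g3 ** W)
    = diag3 w v (sgn g1 / sqrt a) (sgn g2 / sqrt b) (sgn g3 / sqrt c) ** W"
proof -
  have "polar (diag3 w v g1 g2 g3 ** W) = diag3 w v g1 g2 g3 ** W ** (transpose W ** diag3 w v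
      (1 / (\<bar>g1\<bar> * a * sqrt a)) (1 / (\<bar>g2\<bar> * b * sqrt b)) (1 / (\<bar>g3\<bar> * c * sqrt c)) ** W)"
    unfolding polar_def psd_sqrt_gram_diag3_mult[OF assms] pinv_diag3_sandwich[OF assms] ..
  also have "\<dots> = diag3 w v (g1 * a * (1 / (\<bar>g1\<bar> * a * sqrt a))) (g2 * b * (1 / (\<bar>g2\<bar> * b * sqrt b)))
      (g3 * c * (1 / (\<bar>g3\<bar> * c * sqrt c))) ** W"
    by (simp add: matrix_mul_assoc flip: M) (simp add: M diag3_mult flip: matrix_mul_assoc)
  finally show ?thesis
    using polar_coeff_identities(4) nn by simp
qed

end

section \<open>Gaussian moments\<close>

lemma Basis_vec_eq_range_axis: "(Basis :: (real^'n) set) = range (\<lambda>i. axis i 1)"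
  by (auto simp: Basis_vec_def)

lemma has_bochner_integral_lborel_vec_prod:
  fixes f :: "'n::finite \<Rightarrow> real \<Rightarrow> real"
  assumes int: "\<And>i. integrable lborel (f i)"
  shows "has_bochner_integral lborel (\<lambda>z::real^'n. \<Prod>i\<in>UNIV. f i (z$i)) (\<Prod>i\<in>UNIV. integral\<^sup>L lborel (f i))"
proof -
  define F where "F b = f (SOME i. axis i 1 = b)" for b :: "real^'n"
  have F_ax: "F (axis i 1) = f i" for i
  proof -
    have "(SOME j. axis j (1::real) = axis i 1) = i"
      by (rule some_equality) (auto simp: axis_eq_axis)
    then show ?thesis by (simp add: F_def)
  qed
  have meas[measurable]: "f i \<in> borel_measurable lborel" for i using int by auto
  have Fmeas[measurable]: "F b \<in> borel_measurable borel" for b unfolding F_def using meas by simp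
  interpret P: product_sigma_finite "\<lambda>_::real^'n. (lborel::real measure)"
    by (simp add: product_sigma_finite_def sigma_finite_lborel)
  define T where "T = (\<lambda>g::real^'n \<Rightarrow> real. \<Sum>b\<in>Basis. g b *\<^sub>R b)"
  have Tmeas: "T \<in> measurable (\<Pi>\<^sub>M b\<in>Basis. lborel) borel" unfolding T_def by measurable
  have Tcomp: "(T g) $ i = g (axis i 1)" for g i
  proof -
    have "(T g) $ i = (T g) \<bullet> axis i 1" by (simp add: cart_eq_inner_axis)
    also have "\<dots> = g (axis i 1)" unfolding T_def
      by (rule inner_sum_left_Basis) (simp add: Basis_vec_eq_range_axis)
    finally show ?thesis .
  qed
  have h: "(\<Prod>i\<in>UNIV. f i ((T g) $ i)) = (\<Prod>b\<in>Basis. F b (g b))" for g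
  proof -
    have "(\<Prod>b\<in>Basis. F b (g b)) = (\<Prod>i\<in>UNIV. F (axis i 1) (g (axis i 1)))"
      unfolding Basis_vec_eq_range_axis by (subst prod.reindex) (auto simp: inj_def axis_eq_axis)
    then show ?thesis by (simp add: F_ax Tcomp)
  qed
  have hm: "(\<lambda>z::real^'n. \<Prod>i\<in>UNIV. f i (z$i)) \<in> borel_measurable borel" by measurable
  have intF: "\<And>b. b \<in> Basis \<Longrightarrow> integrable lborel (F b)" unfolding F_def using int by simp
  have "has_bochner_integral (\<Pi>\<^sub>M b\<in>Basis. lborel) (\<lambda>g. \<Prod>b\<in>Basis. F b (g b))
      (\<Prod>b\<in>Basis. integral\<^sup>L lborel (F b))"
    using P.product_integrable_prod[of Basis F] P.product_integral_prod[of Basis F] intF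
    by (simp add: has_bochner_integral_iff)
  moreover have "(\<Prod>b\<in>Basis. integral\<^sup>L lborel (F b)) = (\<Prod>i\<in>UNIV. integral\<^sup>L lborel (f i))"
    unfolding Basis_vec_eq_range_axis by (subst prod.reindex) (auto simp: inj_def axis_eq_axis F_ax)
  ultimately have "has_bochner_integral (\<Pi>\<^sub>M b\<in>Basis. lborel) (\<lambda>g. \<Prod>i\<in>UNIV. f i ((T g) $ i))
      (\<Prod>i\<in>UNIV. integral\<^sup>L lborel (f i))"
    by (simp add: h)
  then show ?thesis
    unfolding lborel_eq[where 'a="real^'n"] T_def[symmetric] by (rule has_bochner_integral_distr[OF hm Tmeas])
qed

definition std_normal_moment :: "nat \<Rightarrow> real" where
  "std_normal_moment k = (\<integral>x. std_normal_density x * x ^ k \<partial>lborel)"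

lemma std_normal_moment_simps:
  "std_normal_moment 0 = 1" "std_normal_moment (Suc 0) = 0" "std_normal_moment (Suc (Suc 0)) = 1"
  "std_normal_moment (Suc (Suc (Suc 0))) = 0" "std_normal_moment (Suc (Suc (Suc (Suc 0)))) = 3"
  using integral_std_normal_moment_even[of 0] integral_std_normal_moment_odd[of 0]
    integral_std_normal_moment_even[of 1] integral_std_normal_moment_odd[of 1]
    integral_std_normal_moment_even[of 2]
  by (simp_all add: std_normal_moment_def numeral_eq_Suc fact_numeral)

lemma has_bochner_integral_std_normal_monomial:
  "has_bochner_integral lborel (\<lambda>z::real^'n. \<Prod>m\<in>UNIV. std_normal_density (z$m) * (z$m) ^ e m)
     (\<Prod>m\<in>UNIV. std_normal_moment (e m))"
  unfolding std_normal_moment_def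
  by (rule has_bochner_integral_lborel_vec_prod) (rule integrable_std_normal_moment)

definition occurrences4 :: "'n \<Rightarrow> 'n \<Rightarrow> 'n \<Rightarrow> 'n \<Rightarrow> 'n \<Rightarrow> nat" where
  "occurrences4 i j k l m = of_bool (i = m) + of_bool (j = m) + of_bool (k = m) + of_bool (l = m)"

lemma prod_std_normal_density_power_occurrences4:
  "(\<Prod>m\<in>UNIV. std_normal_density ((z::real^'n) $ m) * z $ m ^ occurrences4 i j k l m)
     = (\<Prod>m\<in>UNIV. std_normal_density (z $ m)) * (z$i * z$j * z$k * z$l)"
proof -
  have "(\<Prod>m\<in>UNIV. z $ m ^ of_bool (p = m)) = z $ p" for p
  proof -
    have "(\<lambda>m. z $ m ^ of_bool (p = m)) = (\<lambda>m. if p = m then z $ m else 1)" by auto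
    then show ?thesis by (simp only:) (simp add: prod.delta)
  qed
  then have "(\<Prod>m\<in>UNIV. z $ m ^ occurrences4 i j k l m) = z$i * z$j * z$k * z$l"
    unfolding occurrences4_def power_add prod.distrib by simp
  then show ?thesis by (simp add: prod.distrib)
qed

lemma isserlis_std_normal:
  "(\<Prod>m\<in>(UNIV :: 'n::finite set). std_normal_moment (occurrences4 i j k l m))
     = of_bool (i = j \<and> k = l) + of_bool (i = k \<and> j = l) + of_bool (i = l \<and> j = k)"
proof -
  have "(\<Prod>m\<in>(UNIV :: 'n set). std_normal_moment (occurrences4 i j k l m))
      = (\<Prod>m\<in>{i, j, k, l}. std_normal_moment (occurrences4 i j k l m))"
    by (rule prod.mono_neutral_right) (auto simp: occurrences4_def std_normal_moment_simps)
  also have "\<dots> = of_bool (i = j \<and> k = l) + of_bool (i = k \<and> j = l) + of_bool (i = l \<and> j = k)"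
    by (cases "i = j"; cases "i = k"; cases "i = l"; cases "j = k"; cases "j = l"; cases "k = l")
       (simp_all add: occurrences4_def std_normal_moment_simps insert_commute)
  finally show ?thesis .
qed

lemma isserlis_contraction:
  fixes K :: "'n::finite \<Rightarrow> 'n \<Rightarrow> real"
  shows "(\<Sum>i\<in>UNIV. \<Sum>j\<in>UNIV. \<Sum>k\<in>UNIV. \<Sum>l\<in>UNIV. K i j * K k l *
           (of_bool (i = j \<and> k = l) + of_bool (i = k \<and> j = l) + of_bool (i = l \<and> j = k)))
    = (\<Sum>i\<in>UNIV. K i i)\<^sup>2 + (\<Sum>i\<in>UNIV. \<Sum>j\<in>UNIV. K i j * K i j) + (\<Sum>i\<in>UNIV. \<Sum>j\<in>UNIV. K i j * K j i)"
proof -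
  have "K i j * K k l * (of_bool (i = j \<and> k = l) + of_bool (i = k \<and> j = l) + of_bool (i = l \<and> j = k))
      = (if i = j then K i j else 0) * (if k = l then K k l else 0)
      + (if j = l then if i = k then K i j * K k l else 0 else 0)
      + (if i = l then if j = k then K i j * K k l else 0 else 0)" for i j k l
    by simp
  then show ?thesis
    by (simp only: sum.distrib) (simp add: sum.delta power2_eq_square flip: sum_distrib_left sum_distrib_right)
qed

lemma has_bochner_integral_std_normal_quadratic_form_sq:
  fixes K :: "real^'n^'n"
  shows "has_bochner_integral lborel
    (\<lambda>z::real^'n. (\<Prod>m\<in>UNIV. std_normal_density (z$m)) * (z \<bullet> (K *v z))\<^sup>2)
    ((\<Sum>i\<in>UNIV. K$i$i)\<^sup>2 + (\<Sum>i\<in>UNIV. \<Sum>j\<in>UNIV. K$i$j * K$i$j) + (\<Sum>i\<in>UNIV. \<Sum>j\<in>UNIV. K$i$j * K$j$i))"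
proof -
  let ?mono = "\<lambda>i j k l (z::real^'n). \<Prod>m\<in>UNIV. std_normal_density (z$m) * (z$m) ^ occurrences4 i j k l m"
  have "has_bochner_integral lborel (?mono i j k l)
      (of_bool (i = j \<and> k = l) + of_bool (i = k \<and> j = l) + of_bool (i = l \<and> j = k))" for i j k l
    using has_bochner_integral_std_normal_monomial[of "occurrences4 i j k l"]
    by (simp add: isserlis_std_normal)
  then have "has_bochner_integral lborel (\<lambda>z. \<Sum>i\<in>UNIV. \<Sum>j\<in>UNIV. \<Sum>k\<in>UNIV. \<Sum>l\<in>UNIV. K$i$j * K$k$l * ?mono i j k l z)
     (\<Sum>i\<in>UNIV. \<Sum>j\<in>UNIV. \<Sum>k\<in>UNIV. \<Sum>l\<in>UNIV. K$i$j * K$k$l *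
        (of_bool (i = j \<and> k = l) + of_bool (i = k \<and> j = l) + of_bool (i = l \<and> j = k)))"
    by (intro has_bochner_integral_sum has_bochner_integral_mult_right)
  moreover have "(\<Sum>i\<in>UNIV. \<Sum>j\<in>UNIV. \<Sum>k\<in>UNIV. \<Sum>l\<in>UNIV. K$i$j * K$k$l * ?mono i j k l z)
      = (\<Prod>m\<in>UNIV. std_normal_density (z$m)) * (z \<bullet> (K *v z))\<^sup>2" for z
  proof -
    have q: "z \<bullet> (K *v z) = (\<Sum>i\<in>UNIV. \<Sum>j\<in>UNIV. K$i$j * (z$i * z$j))"
      by (simp add: inner_vec_def matrix_vector_mult_def sum_distrib_left mult_ac)
    have "(z \<bullet> (K *v z))\<^sup>2
        = (\<Sum>i\<in>UNIV. \<Sum>j\<in>UNIV. \<Sum>k\<in>UNIV. \<Sum>l\<in>UNIV. K$i$j * (z$i * z$j) * (K$k$l * (z$k * z$l)))"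
      unfolding q power2_eq_square by (simp only: sum_distrib_right) (simp only: sum_distrib_left)
    then show ?thesis
      unfolding prod_std_normal_density_power_occurrences4 by (simp add: sum_distrib_left mult_ac)
  qed
  ultimately show ?thesis using isserlis_contraction[of "\<lambda>i j. K$i$j"] by simp
qed

lemma has_bochner_integral_std_normal_vec_density:
  "has_bochner_integral lborel (\<lambda>z::real^'n. \<Prod>m\<in>UNIV. std_normal_density (z$m)) 1"
  using has_bochner_integral_std_normal_monomial[of "\<lambda>_. 0"] by (simp add: std_normal_moment_simps)

lemma has_bochner_integral_std_normal_affine_sq:
  "has_bochner_integral lborel (\<lambda>s. std_normal_density s * (A + \<sigma> * s)\<^sup>2) (A\<^sup>2 + \<sigma>\<^sup>2)"
proof -
  from std_normal_moment_even[of 0] std_normal_moment_odd[of 0] std_normal_moment_even[of 1]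
  have "has_bochner_integral lborel (\<lambda>x. A\<^sup>2 * (std_normal_density x * x ^ 0)
      + (2 * A * \<sigma>) * (std_normal_density x * x ^ 1) + \<sigma>\<^sup>2 * (std_normal_density x * x ^ 2))
      (A\<^sup>2 * 1 + (2 * A * \<sigma>) * 0 + \<sigma>\<^sup>2 * 1)"
    by (intro has_bochner_integral_add has_bochner_integral_mult_right) simp_all
  then show ?thesis
    by (rule has_bochner_integral_cong[THEN iffD1, rotated -1]) (auto simp: power2_eq_square algebra_simps)
qed

section \<open>The population loss and its gradient\<close>

lemma residual_eq_quadratic_form:
  fixes S :: "real^'n^'n" and W :: "real^'m^'n"
  shows "((S *v z) \<bullet> w)\<^sup>2 - (\<Sum>j\<in>UNIV. (column j W \<bullet> (S *v z))\<^sup>2)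
     = z \<bullet> ((transpose S ** outer w w ** S - (transpose S ** W) ** transpose (transpose S ** W)) *v z)"
proof -
  have "z \<bullet> ((transpose S ** outer w w ** S) *v z) = (S *v z) \<bullet> (outer w w *v (S *v z))"
    by (metis inner_matrix_vector_transpose matrix_vector_mul_assoc transpose_transpose)
  then have outer: "z \<bullet> ((transpose S ** outer w w ** S) *v z) = ((S *v z) \<bullet> w)\<^sup>2"
    by (simp add: outer_mult_vector power2_eq_square inner_commute)
  have "z \<bullet> (((transpose S ** W) ** transpose (transpose S ** W)) *v z)
      = (transpose W *v (S *v z)) \<bullet> (transpose W *v (S *v z))"
    by (metis inner_matrix_vector_transpose matrix_transpose_mul matrix_vector_mul_assoc transpose_transpose)
  also have "\<dots> = (\<Sum>j\<in>UNIV. (column j W \<bullet> (S *v z))\<^sup>2)"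
    by (simp add: inner_vec_def matrix_vector_mult_def transpose_def column_def power2_eq_square
        del: transpose_matrix_vector)
  finally show ?thesis
    unfolding matrix_vector_mult_diff_rdistrib inner_diff_right outer by simp
qed

lemma pop_loss_closed_form:
  fixes Q :: "real^'n^'n" and W :: "real^'m^'n" and w :: "real^'n"
  defines "S \<equiv> psd_sqrt Q"
  defines "K \<equiv> transpose S ** outer w w ** S - (transpose S ** W) ** transpose (transpose S ** W)"
  shows "pop_loss \<sigma> Q w W = (trace K)\<^sup>2 + 2 * (K \<bullet> K) + \<sigma>\<^sup>2"
proof -
  have "(\<integral>s. std_normal_density s *
            (((S *v z) \<bullet> w)\<^sup>2 + \<sigma> * s - (\<Sum>j\<in>UNIV. (column j W \<bullet> (S *v z))\<^sup>2))\<^sup>2 \<partial>lborel)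
       = (z \<bullet> (K *v z))\<^sup>2 + \<sigma>\<^sup>2" for z
  proof -
    have "((S *v z) \<bullet> w)\<^sup>2 + \<sigma> * s - (\<Sum>j\<in>UNIV. (column j W \<bullet> (S *v z))\<^sup>2) = z \<bullet> (K *v z) + \<sigma> * s" for s
      using residual_eq_quadratic_form[of S z w W] unfolding K_def by linarith
    then show ?thesis
      using has_bochner_integral_std_normal_affine_sq[of "z \<bullet> (K *v z)" \<sigma>]
      by (simp only:) (rule has_bochner_integral_integral_eq)
  qed
  then have "pop_loss \<sigma> Q w W
      = (\<integral>z. (\<Prod>i\<in>UNIV. std_normal_density (z $ i)) * ((z \<bullet> (K *v z))\<^sup>2 + \<sigma>\<^sup>2) \<partial>lborel)"
    by (simp add: pop_loss_def S_def)
  also have "\<dots> = (\<Sum>i\<in>UNIV. K$i$i)\<^sup>2 + (\<Sum>i\<in>UNIV. \<Sum>j\<in>UNIV. K$i$j * K$i$j)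
      + (\<Sum>i\<in>UNIV. \<Sum>j\<in>UNIV. K$i$j * K$j$i) + \<sigma>\<^sup>2 * 1"
    using has_bochner_integral_add[OF has_bochner_integral_std_normal_quadratic_form_sq[of K]
        has_bochner_integral_mult_left[OF has_bochner_integral_std_normal_vec_density, of "\<sigma>\<^sup>2"]]
    by (simp add: has_bochner_integral_integral_eq distrib_left mult.commute)
  also have "\<dots> = (trace K)\<^sup>2 + 2 * (K \<bullet> K) + \<sigma>\<^sup>2"
  proof -
    have "transpose K = K" unfolding K_def
      by (simp add: transpose_diff matrix_transpose_mul transpose_outer matrix_mul_assoc)
    then have "K$j$i = K$i$j" for i j by (metis transpose_def vec_lambda_beta)
    then show ?thesis by (simp add: trace_def inner_vec_def)
  qed
  finally show ?thesis .
qed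

lemma grad_eqI:
  fixes f :: "'a::real_inner \<Rightarrow> real"
  assumes "(f has_derivative (\<lambda>h. G \<bullet> h)) (at x)" shows "grad f x = G"
  unfolding grad_def
proof (rule the_equality)
  show "(f has_derivative (\<lambda>h. G \<bullet> h)) (at x)" by (rule assms)
  fix G' assume "(f has_derivative (\<lambda>h. G' \<bullet> h)) (at x)"
  then have "(\<lambda>h. G' \<bullet> h) = (\<lambda>h. G \<bullet> h)" using has_derivative_unique assms by blast
  then have "G' \<bullet> (G' - G) = G \<bullet> (G' - G)" by metis
  then have "(G' - G) \<bullet> (G' - G) = 0" by (simp add: inner_diff_left)
  then show "G' = G" by simp
qed

lemma bounded_bilinear_matrix_mult: "bounded_bilinear (\<lambda>(A::real^'m^'n) (B::real^'k^'m). A ** B)"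
  unfolding bilinear_conv_bounded_bilinear[symmetric] bilinear_def linear_iff
  by (auto simp: matrix_add_ldistrib matrix_add_rdistrib scalar_matrix_assoc matrix_scalar_ac)

lemma bounded_linear_matrix_mult_left: "bounded_linear (\<lambda>(B::real^'k^'m). (A::real^'m^'n) ** B)"
  using bounded_bilinear.bounded_linear_right[OF bounded_bilinear_matrix_mult] .

lemma bounded_linear_transpose: "bounded_linear (\<lambda>(B::real^'k^'m). transpose B)"
  by (rule linear_conv_bounded_linear[THEN iffD1]) (auto simp: linear_iff transpose_def vec_eq_iff)

lemma bounded_linear_trace: "bounded_linear (\<lambda>(B::real^'n^'n). trace B)"
  by (rule linear_conv_bounded_linear[THEN iffD1]) (auto simp: linear_iff trace_def sum.distrib sum_distrib_left)

lemma inner_sym_gram_variation: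
  fixes K S :: "real^'n^'n" and B H :: "real^'m^'n"
  assumes "transpose K = K"
  shows "K \<bullet> (B ** transpose (transpose S ** H) + (transpose S ** H) ** transpose B) = 2 * ((S ** K ** B) \<bullet> H)"
proof -
  have "K \<bullet> (B ** transpose (transpose S ** H)) = (K ** (transpose S ** H)) \<bullet> B"
    by (simp only: inner_matrix_mult_left transpose_transpose)
  also have "\<dots> = B \<bullet> ((K ** transpose S) ** H)"
    by (metis inner_commute matrix_mul_assoc)
  also have "\<dots> = (transpose (K ** transpose S) ** B) \<bullet> H"
    by (rule inner_matrix_mult_right)
  also have "\<dots> = (S ** K ** B) \<bullet> H"
    by (simp only: assms matrix_transpose_mul transpose_transpose)
  finally have "K \<bullet> (B ** transpose (transpose S ** H)) = (S ** K ** B) \<bullet> H" .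
  moreover have "K \<bullet> ((transpose S ** H) ** transpose B)
      = transpose K \<bullet> transpose ((transpose S ** H) ** transpose B)"
    by (simp only: inner_transpose_transpose)
  moreover have "\<dots> = K \<bullet> (B ** transpose (transpose S ** H))"
    by (simp only: assms matrix_transpose_mul transpose_transpose)
  ultimately show ?thesis by (simp add: inner_add_right)
qed

lemma has_derivative_gram:
  fixes S :: "real^'n^'n" and W :: "real^'m^'n"
  shows "((\<lambda>W. (transpose S ** W) ** transpose (transpose S ** W)) has_derivative
    (\<lambda>H. (transpose S ** W) ** transpose (transpose S ** H) + (transpose S ** H) ** transpose (transpose S ** W)))
    (at W)"
proof -
  have "((\<lambda>W. transpose S ** W) has_derivative (\<lambda>H. transpose S ** H)) (at W)"
    using bounded_linear_matrix_mult_left by (rule bounded_linear_imp_has_derivative)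
  from bounded_bilinear.FDERIV[OF bounded_bilinear_matrix_mult this
      bounded_linear.has_derivative[OF bounded_linear_transpose this]]
  show ?thesis .
qed

lemma has_derivative_gram_loss:
  fixes S C :: "real^'n^'n" and W :: "real^'m^'n"
  assumes C: "transpose C = C"
  defines "K \<equiv> \<lambda>W::real^'m^'n. C - (transpose S ** W) ** transpose (transpose S ** W)"
  shows "((\<lambda>W. (trace (K W))\<^sup>2 + 2 * (K W \<bullet> K W) + s) has_derivative
     (\<lambda>H. (- (4 * trace (K W)) *\<^sub>R (S ** transpose S ** W) - 8 *\<^sub>R (S ** K W ** transpose S ** W)) \<bullet> H)) (at W)"
proof -
  define B where "B = transpose S ** W"
  define G where "G H = B ** transpose (transpose S ** H) + (transpose S ** H) ** transpose B" for H
  have "((\<lambda>W. (transpose S ** W) ** transpose (transpose S ** W)) has_derivative G) (at W)"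
    unfolding G_def B_def by (rule has_derivative_gram)
  then have dK: "(K has_derivative (\<lambda>H. - G H)) (at W)"
    unfolding K_def by (auto intro: derivative_eq_intros)
  have dF: "((\<lambda>W. (trace (K W))\<^sup>2 + 2 * (K W \<bullet> K W) + s) has_derivative
     (\<lambda>H. trace (K W) * trace (- G H) + trace (- G H) * trace (K W)
        + (2 * (K W \<bullet> - G H + - G H \<bullet> K W) + 0 * (K W \<bullet> K W)) + 0)) (at W)"
    using has_derivative_add[OF has_derivative_add[OF
          has_derivative_mult[OF bounded_linear.has_derivative[OF bounded_linear_trace dK]
            bounded_linear.has_derivative[OF bounded_linear_trace dK]]
          has_derivative_mult[OF has_derivative_const has_derivative_inner[OF dK dK]]]
        has_derivative_const]
    unfolding power2_eq_square .
  have "transpose (K W) = K W"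
    unfolding K_def by (simp add: transpose_diff C matrix_transpose_mul)
  then have "K W \<bullet> G H = 2 * ((S ** K W ** B) \<bullet> H)" for H
    unfolding G_def by (rule inner_sym_gram_variation)
  then have gram: "K W \<bullet> G H = 2 * ((S ** K W ** transpose S ** W) \<bullet> H)" for H
    by (simp add: B_def matrix_mul_assoc)
  have "trace (G H) = 2 * ((S ** B) \<bullet> H)" for H
    using inner_sym_gram_variation[of "mat 1" B S H] unfolding G_def trace_eq_inner_mat_1 by simp
  then have trace_G: "trace (G H) = 2 * ((S ** transpose S ** W) \<bullet> H)" for H
    by (simp add: B_def matrix_mul_assoc)
  show ?thesis
  proof (rule has_derivative_eq_rhs[OF dF], rule ext)
    fix H :: "real^'m^'n"
    have "trace (- G H) = - 2 * ((S ** transpose S ** W) \<bullet> H)"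
      by (simp add: trace_uminus trace_G)
    moreover have "K W \<bullet> - G H = - 2 * ((S ** K W ** transpose S ** W) \<bullet> H)"
      and "- G H \<bullet> K W = - 2 * ((S ** K W ** transpose S ** W) \<bullet> H)"
      by (simp_all add: gram inner_commute[of "G H"])
    ultimately show "trace (K W) * trace (- G H) + trace (- G H) * trace (K W)
        + (2 * (K W \<bullet> - G H + - G H \<bullet> K W) + 0 * (K W \<bullet> K W)) + 0
      = (- (4 * trace (K W)) *\<^sub>R (S ** transpose S ** W) - 8 *\<^sub>R (S ** K W ** transpose S ** W)) \<bullet> H"
      unfolding inner_diff_left inner_scaleR_left by (simp only:) (simp add: algebra_simps)
  qed
qed

lemma grad_pop_loss:
  fixes Q :: "real^'n^'n" and W :: "real^'m^'n" and w :: "real^'n"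
  defines "S \<equiv> psd_sqrt Q"
  defines "K \<equiv> transpose S ** outer w w ** S - (transpose S ** W) ** transpose (transpose S ** W)"
  shows "grad (pop_loss \<sigma> Q w) W = (- (4 * trace K)) *\<^sub>R (S ** transpose S ** W) - 8 *\<^sub>R (S ** K ** transpose S ** W)"
proof (rule grad_eqI)
  define C where "C = transpose S ** outer w w ** S"
  have C: "transpose C = C"
    by (simp add: C_def matrix_transpose_mul transpose_outer matrix_mul_assoc)
  have loss: "pop_loss \<sigma> Q w = (\<lambda>W. (trace (C - (transpose S ** W) ** transpose (transpose S ** W)))\<^sup>2
      + 2 * ((C - (transpose S ** W) ** transpose (transpose S ** W))
        \<bullet> (C - (transpose S ** W) ** transpose (transpose S ** W))) + \<sigma>\<^sup>2)"
    unfolding C_def S_def by (rule ext) (rule pop_loss_closed_form)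
  show "(pop_loss \<sigma> Q w has_derivative
      (\<lambda>H. ((- (4 * trace K)) *\<^sub>R (S ** transpose S ** W) - 8 *\<^sub>R (S ** K ** transpose S ** W)) \<bullet> H)) (at W)"
    unfolding loss K_def C_def[symmetric]
    using has_derivative_gram_loss[OF C, where S = S and W = W and s = "\<sigma>\<^sup>2"] by (simp only:)
qed

section \<open>Eigenvalues of \<open>W W\<^sup>T\<close> along the flow\<close>

lemma bounded_linear_transpose_mult_vector: "bounded_linear (\<lambda>X::real^'m^'n. transpose X *v e)"
  by (rule linear_conv_bounded_linear[THEN iffD1])
     (auto simp: linear_iff transpose_def matrix_vector_mult_def vec_eq_iff sum.distrib sum_distrib_left
       algebra_simps simp del: transpose_matrix_vector)

lemma has_real_derivative_gram_quadratic_form: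
  fixes W :: "real \<Rightarrow> real^'m^'n"
  assumes "(W has_vector_derivative W') (at t)"
  shows "((\<lambda>s. e \<bullet> ((W s ** transpose (W s)) *v e)) has_real_derivative
           2 * ((transpose (W t) *v e) \<bullet> (transpose W' *v e))) (at t)"
proof -
  define y where "y s = transpose (W s) *v e" for s
  have y': "(y has_derivative (\<lambda>h. h *\<^sub>R (transpose W' *v e))) (at t)"
    using bounded_linear.has_vector_derivative[OF bounded_linear_transpose_mult_vector assms]
    unfolding y_def has_vector_derivative_def .
  have "e \<bullet> ((W s ** transpose (W s)) *v e) = y s \<bullet> y s" for s
  proof -
    have "(W s ** transpose (W s)) *v e = W s *v (transpose (W s) *v e)"
      by (simp only: matrix_vector_mul_assoc)
    then show ?thesis
      unfolding y_def using inner_matrix_vector_transpose[of e "W s" "transpose (W s) *v e"] by simp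
  qed
  moreover have "((\<lambda>s. y s \<bullet> y s) has_derivative (\<lambda>h. (2 * (y t \<bullet> (transpose W' *v e))) * h)) (at t)"
    using has_derivative_inner[OF y' y']
    by (rule has_derivative_eq_rhs) (auto simp: fun_eq_iff inner_commute algebra_simps)
  ultimately show ?thesis
    unfolding has_field_derivative_def y_def by simp
qed

lemma has_real_derivative_gram_eigenvalue:
  fixes W :: "real \<Rightarrow> real^'m^'n" and D :: "real^'n^'n"
  assumes W': "(W has_vector_derivative - (D ** W t)) (at t)" and D: "transpose D = D"
    and De: "D *v e = x *\<^sub>R e" and Me: "(W t ** transpose (W t)) *v e = m *\<^sub>R e" and "e \<bullet> e = 1"
    and T: "open T" "t \<in> T" and f: "\<And>s. s \<in> T \<Longrightarrow> e \<bullet> ((W s ** transpose (W s)) *v e) = f s"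
  shows "(f has_real_derivative (-2 * x * m)) (at t)"
proof -
  have "transpose (- (D ** W t)) *v e = - ((transpose (W t) ** D) *v e)"
    by (simp add: transpose_uminus matrix_transpose_mul D matrix_vector_mult_def vec_eq_iff sum_negf
        del: transpose_matrix_vector)
  also have "\<dots> = - (x *\<^sub>R (transpose (W t) *v e))"
    by (simp add: De matrix_vector_mult_scaleR del: transpose_matrix_vector flip: matrix_vector_mul_assoc)
  finally have W'e: "transpose (- (D ** W t)) *v e = - (x *\<^sub>R (transpose (W t) *v e))" .
  have "(transpose (W t) *v e) \<bullet> (transpose (W t) *v e) = e \<bullet> (W t *v (transpose (W t) *v e))"
    using inner_matrix_vector_transpose[of e "W t" "transpose (W t) *v e"] by simp
  also have "\<dots> = m"
    using Me \<open>e \<bullet> e = 1\<close> by (simp flip: matrix_vector_mul_assoc)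
  finally have "((\<lambda>s. e \<bullet> ((W s ** transpose (W s)) *v e)) has_real_derivative (-2 * x * m)) (at t)"
    using has_real_derivative_gram_quadratic_form[OF W', of e] W'e by (simp add: inner_minus_right mult.assoc)
  then show ?thesis using has_field_derivative_transform_within_open[OF _ T] f by blast
qed

lemma exists_unit_orthogonal_pair:
  fixes w v :: "real^'n"
  assumes "CARD('n) \<ge> 3"
  obtains u where "u \<bullet> w = 0" "u \<bullet> v = 0" "u \<bullet> u = 1"
proof -
  have "dim {w, v} \<le> card {w, v}" by (rule dim_le_card') simp
  also have "\<dots> < DIM(real^'n)" using assms by (simp add: card_insert_if)
  finally obtain x :: "real^'n" where "x \<noteq> 0" and x: "\<And>y. y \<in> span {w, v} \<Longrightarrow> orthogonal x y"
    by (rule orthogonal_to_subspace_exists) auto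
  have "orthogonal x w" "orthogonal x v" using x by (auto intro: span_base)
  then show ?thesis
    using \<open>x \<noteq> 0\<close> by (intro that[of "(1 / norm x) *\<^sub>R x"])
      (auto simp: orthogonal_def power2_norm_eq_inner[symmetric] power2_eq_square)
qed

context orthonormal_pair
begin

lemma has_real_derivative_diag3_coeffs:
  fixes W :: "real \<Rightarrow> real^'m^'n"
  assumes "CARD('n) \<ge> 3" and T: "open T" "t \<in> T"
    and W': "(W has_vector_derivative - (diag3 w v x y z ** W t)) (at t)"
    and M: "\<And>s. s \<in> T \<Longrightarrow> W s ** transpose (W s) = diag3 w v (a s) (b s) (c s)"
  shows "(a has_real_derivative -2 * x * a t) (at t)"
    and "(b has_real_derivative -2 * y * b t) (at t)"
    and "(c has_real_derivative -2 * z * c t) (at t)"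
proof -
  note eigen = has_real_derivative_gram_eigenvalue[OF W' transpose_diag3 _ _ _ T]
  obtain u where u: "u \<bullet> w = 0" "u \<bullet> v = 0" "u \<bullet> u = 1"
    using exists_unit_orthogonal_pair assms(1) by blast
  show "(a has_real_derivative -2 * x * a t) (at t)"
    by (rule eigen[of w]) (simp_all add: M T diag3_w ww)
  show "(b has_real_derivative -2 * y * b t) (at t)"
    by (rule eigen[of v]) (simp_all add: M T diag3_v vv)
  show "(c has_real_derivative -2 * z * c t) (at t)"
    by (rule eigen[of u]) (simp_all add: M T diag3_orth u)
qed

lemma grad_pop_loss_diag3:
  fixes W :: "real^'m^'n"
  assumes "1 + lam \<ge> 0" and M: "W ** transpose W = diag3 w v a b c"
  defines "r \<equiv> a + (1 + lam) * b + (real CARD('n) - 2) * c"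
  shows "grad (pop_loss \<sigma> (mat 1 + lam *\<^sub>R outer v v) w) W
    = diag3 w v (8 * (a - 1) + 4 * (r - 1)) (8 * (1 + lam)\<^sup>2 * b + 4 * (1 + lam) * (r - 1)) (8 * c + 4 * (r - 1)) ** W"
proof -
  define s where "s = sqrt (1 + lam)"
  have s: "s * s = 1 + lam" using assms(1) by (simp add: s_def)
  define S where "S = diag3 w v 1 s 1"
  have "mat 1 + lam *\<^sub>R outer v v = diag3 w v 1 (s * s) 1"
    unfolding s by (simp add: diag3_def algebra_simps)
  then have sqrtQ: "psd_sqrt (mat 1 + lam *\<^sub>R outer v v) = S"
    using assms(1) by (simp add: psd_sqrt_diag3 S_def s_def)
  have K: "transpose S ** outer w w ** S - (transpose S ** W) ** transpose (transpose S ** W)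
      = diag3 w v (1 - a) (- (s * b * s)) (- c)"
  proof -
    have "(transpose S ** W) ** transpose (transpose S ** W) = S ** (W ** transpose W) ** S"
      by (simp add: S_def transpose_diag3 matrix_transpose_mul matrix_mul_assoc)
    moreover have "outer w w = diag3 w v 1 0 0" by (simp add: diag3_def)
    ultimately show ?thesis by (simp add: M S_def transpose_diag3 diag3_mult diag3_diff)
  qed
  have "trace (diag3 w v (1 - a) (- (s * b * s)) (- c)) = 1 - r"
    unfolding trace_diag3 r_def s[symmetric] by (simp add: algebra_simps)
  then have "grad (pop_loss \<sigma> (mat 1 + lam *\<^sub>R outer v v) w) W
      = (- (4 * (1 - r))) *\<^sub>R (S ** S ** W) - 8 *\<^sub>R (S ** diag3 w v (1 - a) (- (s * b * s)) (- c) ** S ** W)"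
    using grad_pop_loss[of \<sigma> "mat 1 + lam *\<^sub>R outer v v" w W]
    unfolding sqrtQ K by (simp add: S_def transpose_diag3)
  also have "\<dots> = ((- (4 * (1 - r))) *\<^sub>R (S ** S) - 8 *\<^sub>R (S ** diag3 w v (1 - a) (- (s * b * s)) (- c) ** S)) ** W"
    by (simp add: matrix_diff_rdistrib scalar_matrix_assoc)
  also have "\<dots> = diag3 w v (- (4 * (1 - r)) - 8 * (1 - a)) (- (4 * (1 - r)) * (s * s) - 8 * (s * (- (s * b * s)) * s))
      (- (4 * (1 - r)) - 8 * (- c)) ** W"
    by (simp add: S_def diag3_mult scaleR_diag3 diag3_diff)
  also have "\<dots> = diag3 w v (8 * (a - 1) + 4 * (r - 1)) (8 * (s * s)\<^sup>2 * b + 4 * (s * s) * (r - 1))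
      (8 * c + 4 * (r - 1)) ** W"
    by (simp add: power2_eq_square algebra_simps)
  finally show ?thesis unfolding s .
qed

end

lemma sgn_div_sqrt_mult_self:
  assumes "m \<ge> 0" shows "-2 * (sgn g / sqrt m) * m = -2 * sgn g * sqrt m"
proof (cases "m = 0")
  case False
  then have "m / sqrt m = sqrt m" using assms real_div_sqrt by blast
  then show ?thesis by (metis mult.assoc times_divide_eq_left times_divide_eq_right)
qed simp

theorem proposition5p2:
  fixes lam \<sigma> :: real
    and wstar v :: "real^'n"
    and W :: "real \<Rightarrow> real^'m^'n"
    and a b c :: "real \<Rightarrow> real"
    and T :: "real set"
  assumes d3: "CARD('n) \<ge> 3"
    and md: "CARD('m) = CARD('n)"
    and lampos: "lam > 0"
    and nw: "norm wstar = 1" and nv: "norm v = 1" and orth: "v \<bullet> wstar = 0"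
    and T: "open T"
    and flow: "\<And>t. t \<in> T \<Longrightarrow>
       (W has_vector_derivative
          (- polar (grad (pop_loss \<sigma> (mat 1 + lam *\<^sub>R outer v v) wstar) (W t)))) (at t)"
    and form: "\<And>t. t \<in> T \<Longrightarrow>
       W t ** transpose (W t) =
         a t *\<^sub>R outer wstar wstar + b t *\<^sub>R outer v v
         + c t *\<^sub>R (mat 1 - outer wstar wstar - outer v v)"
    and nonneg: "\<And>t. t \<in> T \<Longrightarrow> a t \<ge> 0 \<and> b t \<ge> 0 \<and> c t \<ge> 0"
  shows "\<forall>t\<in>T.
     (let r = a t + (1 + lam) * b t + (real CARD('n) - 2) * c t;
          gw = 8 * (a t - 1) + 4 * (r - 1);
          gv = 8 * (1 + lam)\<^sup>2 * b t + 4 * (1 + lam) * (r - 1);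
          gp = 8 * c t + 4 * (r - 1)
      in (a has_real_derivative (- 2 * sgn gw * sqrt (a t))) (at t)
       \<and> (b has_real_derivative (- 2 * sgn gv * sqrt (b t))) (at t)
       \<and> (c has_real_derivative (- 2 * sgn gp * sqrt (c t))) (at t))"
proof
  fix t assume "t \<in> T"
  interpret orthonormal_pair wstar v
    using nw nv orth by unfold_locales (simp_all add: norm_eq_1 inner_commute)
  have M: "\<And>s. s \<in> T \<Longrightarrow> W s ** transpose (W s) = diag3 wstar v (a s) (b s) (c s)"
    using form by (simp add: diag3_def)
  have nn: "a t \<ge> 0" "b t \<ge> 0" "c t \<ge> 0" using nonneg[OF \<open>t \<in> T\<close>] by auto
  define r where "r = a t + (1 + lam) * b t + (real CARD('n) - 2) * c t"
  define gw gv gp where "gw = 8 * (a t - 1) + 4 * (r - 1)"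
    "gv = 8 * (1 + lam)\<^sup>2 * b t + 4 * (1 + lam) * (r - 1)" "gp = 8 * c t + 4 * (r - 1)"
  have "(W has_vector_derivative
      - (diag3 wstar v (sgn gw / sqrt (a t)) (sgn gv / sqrt (b t)) (sgn gp / sqrt (c t)) ** W t)) (at t)"
    using flow[OF \<open>t \<in> T\<close>] lampos
    by (simp add: grad_pop_loss_diag3 M[OF \<open>t \<in> T\<close>] polar_diag3_mult nn r_def gw_gv_gp_def)
  from has_real_derivative_diag3_coeffs[OF d3 T \<open>t \<in> T\<close> this M]
  show "let r = a t + (1 + lam) * b t + (real CARD('n) - 2) * c t;
          gw = 8 * (a t - 1) + 4 * (r - 1);
          gv = 8 * (1 + lam)\<^sup>2 * b t + 4 * (1 + lam) * (r - 1);
          gp = 8 * c t + 4 * (r - 1)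
      in (a has_real_derivative (- 2 * sgn gw * sqrt (a t))) (at t)
       \<and> (b has_real_derivative (- 2 * sgn gv * sqrt (b t))) (at t)
       \<and> (c has_real_derivative (- 2 * sgn gp * sqrt (c t))) (at t)"
    unfolding Let_def r_def[symmetric] gw_gv_gp_def[symmetric] sgn_div_sqrt_mult_self[OF nn(1)]
      sgn_div_sqrt_mult_self[OF nn(2)] sgn_div_sqrt_mult_self[OF nn(3)]
    by blast
qed

end
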